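(* Let $m,n$ be positive integers, let $r_b>0$ and $r_w>0$ be real numbers, and let $R_{th0}>0$ be a real number with $R_{th0}> m r_b + n r_w$. Define the sequence $(R^{(l)}_{th})_{l\ge 0}$ by $R^{(0)}_{th}=R_{th0}$ and, for $l\ge 1$, \[ \ln\big(R^{(l)}_{th}\big) = \ln(R_{th0}) - \frac{1}{mn}\sum_{i=1}^{m}\sum_{j=1}^{n}\ln\!\left(1-\frac{i r_b + j r_w}{R^{(l-1)}_{th}}\right). \] Then the sequence $(R^{(l)}_{th})_{l\ge0}$ converges, and its limit $R_{th\_array}$ is a solution of the equation \[ \ln(R_{th0})=\frac{1}{mn}\sum_{i=1}^{m}\sum_{j=1}^{n}\ln\big(R_{th\_array}-i r_b-j r_w\big). \]
   Context: This iteration is the paper's "STMC threshold solver algorithm" for computing a single read resistance threshold for an $m\times n$ crossbar memory array with wordline interconnect resistance $r_w$ and bitline interconnect resistance $r_b$ per cell; $R_{th0}$ is the optimal read resistance threshold when line resistance is ignored. (The paper's algorithm also stops after a fixed number of iterations or when successive iterates differ by at most a tolerance $\epsilon$; the lemma concerns the limit of the unstopped iteration.) *)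

theory Defs
  imports "HOL-Analysis.Analysis"
begin

primrec stmc_iter :: "nat \<Rightarrow> nat \<Rightarrow> real \<Rightarrow> real \<Rightarrow> real \<Rightarrow> nat \<Rightarrow> real" where
  "stmc_iter m n rb rw Rth0 0 = Rth0"
| "stmc_iter m n rb rw Rth0 (Suc l) =
     exp (ln Rth0 - (1 / (real m * real n)) *
       (\<Sum>i=1..m. \<Sum>j=1..n.
          ln (1 - (real i * rb + real j * rw) / stmc_iter m n rb rw Rth0 l)))"

end

theory Submission
  imports Defs "HOL-Probability.Characteristic_Functions"
begin

(* Normalise the iterates to e_l = Rth0 / R^(l), which lie in (0, 1]. Then e_(l+1) = G (e_l) for
   G E = prod_(i,j) (1 - (i rb + j rw) E / Rth0)^(1/(mn)), a continuous decreasing self-map of [0, 1].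
   For such a map the even and the odd iterates are monotone, and their limits A and G A form a
   cycle of length at most 2; so it suffices to rule out genuine 2-cycles P < Q.
   Comparing the geometric means of (1 - z E) E at both points of a 2-cycle forces P + Q > 1.
   Since ln (1 - z x) / ln (1 - x) is decreasing in x, a 2-cycle also satisfies
   ln P ln (1 - P) <= ln Q ln (1 - Q); but x |-> ln x ln (1 - x) is symmetric about 1/2 and strictly
   decreasing on [1/2, 1), a contradiction. The fixed point A then gives Rarr = Rth0 / A. *)

lemma concave_on_one_minus_powr:
  fixes s :: real assumes "0 \<le> s" "s \<le> 1"
  shows "concave_on {..<1} (\<lambda>x. (1 - x) powr s)"
proof (rule f''_le0_imp_concave)
  show "((\<lambda>x. (1 - x) powr s) has_real_derivative - s * (1 - x) powr (s - 1)) (at x)"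
    if "x \<in> {..<1}" for x
    using that by (auto intro!: derivative_eq_intros)
  show "((\<lambda>x. - s * (1 - x) powr (s - 1)) has_real_derivative s * (s - 1) * (1 - x) powr (s - 2)) (at x)"
    if "x \<in> {..<1}" for x
    using that by (auto intro!: derivative_eq_intros simp: algebra_simps)
  show "s * (s - 1) * (1 - x) powr (s - 2) \<le> 0" for x
    using assms by (intro mult_nonpos_nonneg mult_nonneg_nonpos) auto
qed simp

lemma ln_one_minus_mult_ratio_antimono:
  fixes P Q z :: real assumes "0 < P" "P \<le> Q" "Q < 1" "0 \<le> z" "z \<le> 1"
  shows "ln (1 - z * Q) / ln (1 - Q) \<le> ln (1 - z * P) / ln (1 - P)"
proof -
  define s where "s = ln (1 - z * P) / ln (1 - P)"
  have lnP: "ln (1 - P) < 0" and lnQ: "ln (1 - Q) < 0" using assms by auto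
  have zP: "z * P \<le> P" "0 \<le> z * P"
    using assms by (auto intro: mult_left_le_one_le)
  have "0 < 1 - P" "1 - P \<le> 1 - z * P" "1 - z * P \<le> 1" and zP1: "0 < 1 - z * P"
    using assms zP by linarith+
  then have "ln (1 - P) \<le> ln (1 - z * P)" "ln (1 - z * P) \<le> 0"
    by simp_all
  then have s: "0 \<le> s" "s \<le> 1" using lnP by (auto simp: s_def divide_nonpos_neg)
  have powr_P: "(1 - P) powr s = 1 - z * P"
    using zP1 assms by (simp add: s_def powr_def)
  \<comment> \<open>s is chosen so that (1 - P)^s = 1 - z P; concavity of (1 - x)^s on [0, Q] then
    pushes (1 - Q)^s below the chord value 1 - z Q.\<close>
  have "concave_on {0..Q} (\<lambda>x. (1 - x) powr s)"
    using concave_on_one_minus_powr[OF s] assms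
    unfolding concave_on_def by (auto intro: convex_on_subset)
  then have "((1 - Q) powr s - 1 powr s) / Q * P + 1 powr s \<le> (1 - P) powr s"
    using concave_onD_Icc'[of 0 Q _ P] assms by fastforce
  then have "P * ((1 - Q) powr s + z * Q) \<le> P * 1"
    using assms by (simp add: powr_P field_simps)
  then have "(1 - Q) powr s + z * Q \<le> 1"
    using assms(1) by (rule mult_left_le_imp_le)
  then have "(1 - Q) powr s \<le> 1 - z * Q"
    by simp
  then have "ln ((1 - Q) powr s) \<le> ln (1 - z * Q)"
    using assms by (intro ln_mono) auto
  then have "s * ln (1 - Q) \<le> ln (1 - z * Q)"
    by simp
  then have "ln (1 - z * Q) / ln (1 - Q) \<le> s"
    using lnQ by (simp add: neg_divide_le_eq)
  then show ?thesis
    unfolding s_def .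
qed

lemma one_minus_mult_ln_less_mult_ln:
  fixes t :: real assumes "1/2 < t" "t < 1"
  shows "(1 - t) * ln (1 - t) < t * ln t"
proof -
  have t: "0 < t" "0 < 1 - t" using assms by auto
  have "ln (1 + (1 / t - 1)) < 1 / t - 1"
    using assms by (intro ln_add_one_self_less_self) (simp add: field_simps)
  then have ln_t: "0 < 1 / t - 1 + ln t"
    using t by (simp add: ln_div)
  have "(1 - t) * ln (1 - t) - t * ln t = (1 - t) * ln ((1 - t) / t) + (1 - 2 * t) * ln t"
    using t by (simp add: ln_div algebra_simps)
  also have "\<dots> \<le> (1 - t) * ((1 - t) / t - 1) + (1 - 2 * t) * ln t"
    using t by (simp add: ln_le_minus_one)
  also have "\<dots> = (1 - 2 * t) * (1 / t - 1 + ln t)"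
    using t by (simp add: field_simps)
  also have "\<dots> < 0"
    using assms ln_t by (intro mult_neg_pos) auto
  finally show ?thesis by simp
qed

lemma ln_mult_ln_one_minus_strict_antimono:
  fixes x y :: real assumes "1/2 \<le> x" "x < y" "y < 1"
  shows "ln y * ln (1 - y) < ln x * ln (1 - x)"
proof -
  have "\<exists>c. x < c \<and> c < y \<and> ln y * ln (1 - y) - ln x * ln (1 - x)
      = (y - x) * (ln (1 - c) / c - ln c / (1 - c))"
    using assms by (intro MVT2) (auto intro!: derivative_eq_intros simp: field_simps)
  then obtain c where c: "x < c" "c < y" and mvt: "ln y * ln (1 - y) - ln x * ln (1 - x)
      = (y - x) * (ln (1 - c) / c - ln c / (1 - c))"
    by blast
  have "(1 - c) * ln (1 - c) < c * ln c"
    using assms c by (intro one_minus_mult_ln_less_mult_ln) auto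
  then have "ln (1 - c) / c < ln c / (1 - c)"
    using assms c by (simp add: field_simps)
  then have "(y - x) * (ln (1 - c) / c - ln c / (1 - c)) < 0"
    using assms by (intro mult_pos_neg) auto
  then show ?thesis
    using mvt by simp
qed

lemma ln_mult_ln_one_minus_less:
  fixes P Q :: real assumes "0 < P" "P < Q" "Q < 1" "1 < P + Q"
  shows "ln Q * ln (1 - Q) < ln P * ln (1 - P)"
proof (cases "1/2 \<le> P")
  case True
  then show ?thesis using ln_mult_ln_one_minus_strict_antimono assms by simp
next
  case False
  then have "ln Q * ln (1 - Q) < ln (1 - P) * ln (1 - (1 - P))"
    using ln_mult_ln_one_minus_strict_antimono[of "1 - P" Q] assms by simp
  then show ?thesis by (simp add: mult.commute)
qed

lemma iterate_mono_on_converges_to_fixpoint: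
  fixes H :: "real \<Rightarrow> real" and x :: "nat \<Rightarrow> real"
  assumes maps: "\<And>y. y \<in> {a..b} \<Longrightarrow> H y \<in> {a..b}"
    and mono: "mono_on {a..b} H" and cont: "continuous_on {a..b} H"
    and x0: "x 0 \<in> {a..b}" and x_Suc: "\<And>l. x (Suc l) = H (x l)"
  obtains A where "x \<longlonglongrightarrow> A" "A \<in> {a..b}" "H A = A"
proof -
  have range: "x l \<in> {a..b}" for l
    by (induction l) (use x0 maps x_Suc in auto)
  have "monoseq x"
  proof (cases "x 0 \<le> x 1")
    case True
    have "x l \<le> x (Suc l)" for l
    proof (induction l)
      case (Suc l)
      then show ?case
        using mono_onD[OF mono range range Suc.IH] by (simp only: x_Suc)
    qed (use True in simp)
    then show ?thesis by (simp add: monoseq_Suc)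
  next
    case False
    have "x (Suc l) \<le> x l" for l
    proof (induction l)
      case (Suc l)
      then show ?case
        using mono_onD[OF mono range range Suc.IH] by (simp only: x_Suc)
    qed (use False in simp)
    then show ?thesis by (simp add: monoseq_Suc)
  qed
  moreover have "Bseq x"
  proof (rule BseqI')
    show "norm (x l) \<le> max \<bar>a\<bar> \<bar>b\<bar>" for l
      using range[of l] by auto
  qed
  ultimately obtain A where A: "x \<longlonglongrightarrow> A"
    using Bseq_monoseq_convergent convergent_def by blast
  have A_range: "A \<in> {a..b}"
    using range by (intro Lim_in_closed_set[OF closed_atLeastAtMost _ _ A]) auto
  have "(\<lambda>l. H (x l)) \<longlonglongrightarrow> H A"
    using range A_range by (intro continuous_on_tendsto_compose[OF cont A]) auto
  moreover have "(\<lambda>l. H (x l)) \<longlonglongrightarrow> A"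
    using LIMSEQ_Suc[OF A] by (simp add: x_Suc)
  ultimately have "H A = A"
    by (rule LIMSEQ_unique)
  then show thesis
    using that A A_range by blast
qed

lemma iterate_antimono_on_converges_to_fixpoint:
  fixes G :: "real \<Rightarrow> real" and x :: "nat \<Rightarrow> real"
  assumes maps: "\<And>y. y \<in> {a..b} \<Longrightarrow> G y \<in> {a..b}"
    and anti: "antimono_on {a..b} G" and cont: "continuous_on {a..b} G"
    and no_2_cycle:
      "\<And>P Q. P \<in> {a..b} \<Longrightarrow> Q \<in> {a..b} \<Longrightarrow> P < Q \<Longrightarrow> G P = Q \<Longrightarrow> G Q = P \<Longrightarrow> False"
    and x0: "x 0 \<in> {a..b}" and x_Suc: "\<And>l. x (Suc l) = G (x l)"
  obtains A where "x \<longlonglongrightarrow> A" "A \<in> {a..b}" "G A = A"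
proof -
  have range: "x l \<in> {a..b}" for l
    by (induction l) (use x0 maps x_Suc in auto)
  have maps_GG: "(G \<circ> G) y \<in> {a..b}" if "y \<in> {a..b}" for y
    using maps that by simp
  have mono_GG: "mono_on {a..b} (G \<circ> G)"
  proof (rule mono_onI)
    fix r s assume "r \<in> {a..b}" "s \<in> {a..b}" "r \<le> s"
    then have "G s \<le> G r"
      using monotone_onD[OF anti] by blast
    then show "(G \<circ> G) r \<le> (G \<circ> G) s"
      using monotone_onD[OF anti] maps \<open>r \<in> {a..b}\<close> \<open>s \<in> {a..b}\<close> by simp
  qed
  have cont_GG: "continuous_on {a..b} (G \<circ> G)"
    using maps by (intro continuous_on_compose continuous_on_subset[OF cont]) auto
  have even_Suc: "x (2 * Suc l) = (G \<circ> G) (x (2 * l))" for l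
    by (simp add: x_Suc)
  obtain A where even: "(\<lambda>l. x (2 * l)) \<longlonglongrightarrow> A" and A: "A \<in> {a..b}" "(G \<circ> G) A = A"
    by (rule iterate_mono_on_converges_to_fixpoint[OF maps_GG mono_GG cont_GG, of "\<lambda>l. x (2 * l)"])
      (use x0 even_Suc in auto)
  have odd: "(\<lambda>l. x (2 * l + 1)) \<longlonglongrightarrow> G A"
    using continuous_on_tendsto_compose[OF cont even] range A by (simp add: x_Suc)
  have "G A = A"
  proof (rule ccontr)
    assume "G A \<noteq> A"
    then consider "A < G A" | "G A < A" by linarith
    then show False
      using no_2_cycle[OF A(1) maps[OF A(1)] _ refl] no_2_cycle[OF maps[OF A(1)] A(1) _ _ refl] A(2)
      by cases simp_all
  qed
  then have "x \<longlonglongrightarrow> A"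
    using limseq_even_odd[OF even] odd by simp
  then show thesis
    using that A \<open>G A = A\<close> by blast
qed

locale weighted_log_map =
  fixes K :: "'k set" and w z :: "'k \<Rightarrow> real"
  assumes finite_K: "finite K" and K_nonempty: "K \<noteq> {}"
    and w_pos: "\<And>k. k \<in> K \<Longrightarrow> 0 < w k" and sum_w: "sum w K = 1"
    and z_pos: "\<And>k. k \<in> K \<Longrightarrow> 0 < z k" and z_less_1: "\<And>k. k \<in> K \<Longrightarrow> z k < 1"
begin

definition G :: "real \<Rightarrow> real" where
  "G E = exp (\<Sum>k\<in>K. w k * ln (1 - z k * E))"

lemma one_minus_z_pos:
  assumes "k \<in> K" "E \<le> 1" shows "0 < 1 - z k * E"
proof -
  have "z k * E \<le> z k"
    using mult_left_mono[of E 1 "z k"] z_pos[OF assms(1)] assms(2) by simp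
  then show ?thesis
    using z_less_1[OF assms(1)] by linarith
qed

lemma ln_G: "ln (G E) = (\<Sum>k\<in>K. w k * ln (1 - z k * E))"
  by (simp add: G_def)

lemma G_pos: "0 < G E"
  by (simp add: G_def)

lemma G_0: "G 0 = 1"
  by (simp add: G_def)

lemma G_less_1:
  assumes "0 < E" "E \<le> 1" shows "G E < 1"
proof -
  have "(\<Sum>k\<in>K. w k * ln (1 - z k * E)) < (\<Sum>k\<in>K. 0)"
  proof (rule sum_strict_mono[OF finite_K K_nonempty])
    fix k assume k: "k \<in> K"
    have "ln (1 - z k * E) < 0"
      using one_minus_z_pos[OF k assms(2)] z_pos[OF k] assms by simp
    then show "w k * ln (1 - z k * E) < 0"
      using w_pos[OF k] by (simp add: mult_pos_neg)
  qed
  then show ?thesis by (simp add: G_def)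
qed

lemma G_antimono: "antimono_on {..1} G"
proof (rule monotone_onI)
  fix x y :: real assume xy: "x \<in> {..1}" "y \<in> {..1}" "x \<le> y"
  have "w k * ln (1 - z k * y) \<le> w k * ln (1 - z k * x)" if k: "k \<in> K" for k
    using one_minus_z_pos[OF k] xy z_pos[OF k] w_pos[OF k] by (auto intro!: mult_left_mono)
  then show "G y \<le> G x"
    unfolding G_def by (intro exp_mono sum_mono)
qed

lemma continuous_on_G: "continuous_on {..1} G"
  unfolding G_def using one_minus_z_pos
  by (intro continuous_intros) (auto simp: less_imp_neq[symmetric])

lemma G_2_cycle_sum_gt_1:
  assumes "0 < P" "P < Q" "Q \<le> 1" "G P = Q" "G Q = P"
  shows "1 < P + Q"
proof (rule ccontr)
  assume "\<not> 1 < P + Q"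
  \<comment> \<open>ln (G E) + ln E takes the value ln P + ln Q at both points of the cycle, yet each
    (1 - z E) E is strictly increasing on [0, 1 / (2 z)], which contains P and Q.\<close>
  have sum_ln: "(\<Sum>k\<in>K. w k * ln ((1 - z k * E) * E)) = ln (G E) + ln E"
    if "0 < E" "E \<le> 1" for E
  proof -
    have "(\<Sum>k\<in>K. w k * ln ((1 - z k * E) * E)) = (\<Sum>k\<in>K. w k * ln (1 - z k * E) + w k * ln E)"
      using one_minus_z_pos that by (intro sum.cong) (simp_all add: ln_mult_pos distrib_left)
    also have "\<dots> = ln (G E) + ln E"
      using sum_w by (simp add: ln_G sum.distrib flip: sum_distrib_right)
    finally show ?thesis .
  qed
  have "(\<Sum>k\<in>K. w k * ln ((1 - z k * P) * P)) < (\<Sum>k\<in>K. w k * ln ((1 - z k * Q) * Q))"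
  proof (rule sum_strict_mono[OF finite_K K_nonempty])
    fix k assume k: "k \<in> K"
    have "(1 - z k * Q) * Q - (1 - z k * P) * P = (Q - P) * (1 - z k * (P + Q))"
      by (simp add: algebra_simps)
    also have "\<dots> > 0"
      using assms \<open>\<not> 1 < P + Q\<close> one_minus_z_pos[OF k, of "P + Q"] by simp
    moreover have "0 < (1 - z k * P) * P"
      using one_minus_z_pos[OF k, of P] assms by simp
    ultimately show "w k * ln ((1 - z k * P) * P) < w k * ln ((1 - z k * Q) * Q)"
      using w_pos[OF k] by simp
  qed
  then show False
    using sum_ln[of P] sum_ln[of Q] assms by simp
qed

lemma G_no_2_cycle:
  assumes "0 < P" "P < Q" "Q \<le> 1" "G P = Q" "G Q = P"
  shows False
proof -
  have "Q < 1"
    using G_less_1[of P] assms by simp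
  have "w k * (ln (1 - z k * Q) * ln (1 - P)) \<le> w k * (ln (1 - z k * P) * ln (1 - Q))"
    if k: "k \<in> K" for k
  proof -
    have lnP: "ln (1 - P) < 0" and lnQ: "ln (1 - Q) < 0"
      using assms \<open>Q < 1\<close> by auto
    have "ln (1 - z k * Q) / ln (1 - Q) * (ln (1 - Q) * ln (1 - P))
        \<le> ln (1 - z k * P) / ln (1 - P) * (ln (1 - Q) * ln (1 - P))"
      using assms \<open>Q < 1\<close> z_pos[OF k] z_less_1[OF k] mult_neg_neg[OF lnQ lnP]
      by (intro mult_right_mono ln_one_minus_mult_ratio_antimono) auto
    then show ?thesis
      using w_pos[OF k] lnP lnQ by (intro mult_left_mono) auto
  qed
  then have "ln (G Q) * ln (1 - P) \<le> ln (G P) * ln (1 - Q)"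
    unfolding ln_G sum_distrib_right by (intro sum_mono) (simp add: mult.assoc)
  moreover have "ln Q * ln (1 - Q) < ln P * ln (1 - P)"
    using assms \<open>Q < 1\<close> G_2_cycle_sum_gt_1 by (intro ln_mult_ln_one_minus_less) auto
  ultimately show False
    using assms by simp
qed

lemma G_iterates_converge:
  assumes x0: "x 0 \<in> {0..1}" and x_Suc: "\<And>l. x (Suc l) = G (x l)"
  obtains A where "x \<longlonglongrightarrow> A" "0 < A" "A \<le> 1" "G A = A"
proof -
  have maps: "G y \<in> {0..1}" if "y \<in> {0..1}" for y
  proof -
    have "G y \<le> G 0"
      using monotone_onD[OF G_antimono, of 0 y] that by simp
    then show ?thesis
      using G_pos[of y] G_0 by simp
  qed
  have no_2_cycle: "False" if "P \<in> {0..1}" "Q \<in> {0..1}" "P < Q" "G P = Q" "G Q = P" for P Q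
  proof (cases "P = 0")
    case True
    then show False using that G_0 G_pos[of 1] by simp
  next
    case False
    then show False using that G_no_2_cycle[of P Q] by simp
  qed
  have anti: "antimono_on {0..1} G"
    using G_antimono by (rule monotone_on_subset) auto
  have cont: "continuous_on {0..1} G"
    using continuous_on_G by (rule continuous_on_subset) auto
  obtain A where "x \<longlonglongrightarrow> A" "A \<in> {0..1}" "G A = A"
    by (rule iterate_antimono_on_converges_to_fixpoint[where G = G,
          OF maps anti cont no_2_cycle x0 x_Suc])
  then show thesis
    using that G_pos[of A] by simp
qed

end

locale stmc_array =
  fixes m n :: nat and rb rw Rth0 :: real
  assumes m_pos: "0 < m" and n_pos: "0 < n" and rb_pos: "0 < rb" and rw_pos: "0 < rw"
    and Rth0_gt: "real m * rb + real n * rw < Rth0"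
begin

abbreviation R :: "nat \<Rightarrow> real" where
  "R \<equiv> stmc_iter m n rb rw Rth0"

definition cells :: "(nat \<times> nat) set" where
  "cells = {1..m} \<times> {1..n}"

definition load :: "nat \<times> nat \<Rightarrow> real" where
  "load k = real (fst k) * rb + real (snd k) * rw"

lemma Rth0_pos: "0 < Rth0"
proof -
  have "0 < real m * rb" "0 < real n * rw"
    using m_pos n_pos rb_pos rw_pos by simp_all
  then show ?thesis
    using Rth0_gt by linarith
qed

lemma Rth0_le_div: "0 < A \<Longrightarrow> A \<le> 1 \<Longrightarrow> Rth0 \<le> Rth0 / A"
  using Rth0_pos by (simp add: le_divide_eq)

lemma load_bounds:
  assumes "k \<in> cells" shows "0 < load k" "load k < Rth0"
proof -
  obtain i j where k: "k = (i, j)" "1 \<le> i" "i \<le> m" "1 \<le> j" "j \<le> n"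
    using assms by (cases k) (auto simp: cells_def)
  have "real i * rb \<le> real m * rb" "real j * rw \<le> real n * rw"
    using k rb_pos rw_pos by (auto intro: mult_right_mono)
  moreover have "0 < real i * rb" "0 < real j * rw"
    using k rb_pos rw_pos by auto
  ultimately show "0 < load k" "load k < Rth0"
    using Rth0_gt by (auto simp: load_def k)
qed

lemma cells_average:
  "1 / (real m * real n) * (\<Sum>i=1..m. \<Sum>j=1..n. f i j)
    = (\<Sum>k\<in>cells. 1 / (real m * real n) * f (fst k) (snd k))"
  by (simp add: cells_def sum.cartesian_product sum_distrib_left case_prod_beta)

sublocale weighted_log_map cells "\<lambda>_. 1 / (real m * real n)" "\<lambda>k. load k / Rth0"
proof
  show "finite cells" "cells \<noteq> {}"
    using m_pos n_pos by (auto simp: cells_def)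
  show "sum (\<lambda>_. 1 / (real m * real n)) cells = 1"
    using m_pos n_pos by (simp add: cells_def)
  show "0 < load k / Rth0" "load k / Rth0 < 1" if "k \<in> cells" for k
    using load_bounds[OF that] Rth0_pos by auto
qed (use m_pos n_pos in simp)

lemma R_pos: "0 < R l"
  using Rth0_pos by (cases l) auto

lemma normalized_R_Suc: "Rth0 / R (Suc l) = G (Rth0 / R l)"
proof -
  define S where "S = (\<Sum>k\<in>cells. 1 / (real m * real n) * ln (1 - load k / Rth0 * (Rth0 / R l)))"
  have "1 / (real m * real n) * (\<Sum>i=1..m. \<Sum>j=1..n. ln (1 - (real i * rb + real j * rw) / R l)) = S"
    unfolding cells_average S_def
  proof (rule sum.cong[OF refl])
    fix k
    show "1 / (real m * real n) * ln (1 - (real (fst k) * rb + real (snd k) * rw) / R l)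
        = 1 / (real m * real n) * ln (1 - load k / Rth0 * (Rth0 / R l))"
      using Rth0_pos by (simp add: load_def)
  qed
  then have "R (Suc l) = exp (ln Rth0 - S)"
    by simp
  then have "Rth0 / R (Suc l) = exp S"
    using Rth0_pos by (simp add: exp_diff)
  then show ?thesis
    by (simp add: G_def S_def)
qed

lemma fixed_point_equation:
  assumes "0 < A" "A \<le> 1" "G A = A"
  shows "ln Rth0 = 1 / (real m * real n) *
    (\<Sum>i=1..m. \<Sum>j=1..n. ln (Rth0 / A - real i * rb - real j * rw))"
proof -
  define w where "w = 1 / (real m * real n)"
  have ln_cell: "ln (1 - load k / Rth0 * A) = ln (Rth0 / A - load k) - ln (Rth0 / A)"
    if "k \<in> cells" for k
  proof -
    have "1 - load k / Rth0 * A = (Rth0 / A - load k) / (Rth0 / A)"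
      using assms Rth0_pos by (simp add: field_simps)
    moreover have "0 < Rth0 / A - load k"
      using load_bounds[OF that] Rth0_le_div[OF assms(1,2)] by simp
    moreover have "0 < Rth0 / A"
      using assms Rth0_pos by simp
    ultimately show ?thesis
      by (simp only: ln_divide_pos)
  qed
  have "ln Rth0 - ln (Rth0 / A) = ln A"
    using assms Rth0_pos by (simp add: ln_div)
  also have "\<dots> = (\<Sum>k\<in>cells. w * ln (1 - load k / Rth0 * A))"
    using assms ln_G[of A] by (simp add: w_def)
  also have "\<dots> = (\<Sum>k\<in>cells. w * ln (Rth0 / A - load k) - w * ln (Rth0 / A))"
    using ln_cell by (intro sum.cong) (simp_all add: right_diff_distrib)
  also have "\<dots> = (\<Sum>k\<in>cells. w * ln (Rth0 / A - load k)) - (\<Sum>k\<in>cells. w) * ln (Rth0 / A)"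
    by (simp add: sum_subtractf sum_distrib_right)
  also have "\<dots> = (\<Sum>k\<in>cells. w * ln (Rth0 / A - load k)) - ln (Rth0 / A)"
    unfolding w_def sum_w by simp
  finally have "ln Rth0 = (\<Sum>k\<in>cells. w * ln (Rth0 / A - load k))"
    by simp
  then show ?thesis
    unfolding cells_average w_def load_def by (simp add: diff_diff_eq)
qed

end

theorem lemma1:
  fixes m n :: nat and rb rw Rth0 :: real
  assumes "m > 0" and "n > 0" and "rb > 0" and "rw > 0" and "Rth0 > 0"
    and "Rth0 > real m * rb + real n * rw"
  shows "\<exists>Rarr. stmc_iter m n rb rw Rth0 \<longlonglongrightarrow> Rarr \<and> Rarr > real m * rb + real n * rw \<and>
           ln Rth0 = (1 / (real m * real n)) *
             (\<Sum>i=1..m. \<Sum>j=1..n. ln (Rarr - real i * rb - real j * rw))"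
proof -
  interpret stmc_array m n rb rw Rth0
    using assms by unfold_locales auto
  have "Rth0 / R 0 \<in> {0..1}"
    using Rth0_pos by simp
  then obtain A where A: "(\<lambda>l. Rth0 / R l) \<longlonglongrightarrow> A" "0 < A" "A \<le> 1" "G A = A"
    using G_iterates_converge[where x = "\<lambda>l. Rth0 / R l", OF _ normalized_R_Suc] by blast
  have "(\<lambda>l. Rth0 / (Rth0 / R l)) \<longlonglongrightarrow> Rth0 / A"
    using A by (intro tendsto_divide tendsto_const) auto
  then have "R \<longlonglongrightarrow> Rth0 / A"
    using Rth0_pos R_pos by simp
  moreover have "real m * rb + real n * rw < Rth0 / A"
    using Rth0_le_div[OF A(2,3)] Rth0_gt by linarith
  ultimately show ?thesis
    using fixed_point_equation[OF A(2-4)] by blast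
qed

end
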